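(* Let $D$ be a second-order linear differential operator elliptic at ${\bf z}$, and let ${\bf X}=\{{\bf x}_1,\dots,{\bf x}_N\}$ with ${\bf x}_1={\bf z}$ be such that there exists a positive numerical differentiation formula for $Df({\bf z})$ on ${\bf X}$ that is exact of order $q\in\{3,4\}$. Then $\rho_{q,D}({\bf z},{\bf X},1,2)=\tau_D({\bf z}):=2\sum_{|\alpha|=1}c_{2\alpha}({\bf z})$.
   Context: $\Pi^d_q$: real polynomials in $d$ variables of total degree $<q$. $Df=\sum_{|\alpha|\le2}c_\alpha\partial^\alpha f$ with real coefficient functions; elliptic at ${\bf z}$ means $\sum_{|\alpha|=2}c_\alpha({\bf z})\xi^\alpha>0$ for all $\xi\ne0$. ${\bf X}$ consists of distinct points. A formula $Df({\bf z})\approx\sum_jw_jf({\bf x}_j)$ with ${\bf x}_1={\bf z}$ is positive if $w_1<0$ and $w_j>0$ for $j\ge2$; exact of order $q$ if $Dp({\bf z})=\sum_jw_jp({\bf x}_j)$ for all $p\in\Pi^d_q$. $\rho_{q,D}({\bf z},{\bf X},1,2):=\inf\{\sum_j|w_j|\,\|{\bf x}_j-{\bf z}\|_2^2:{\bf w}\text{ exact of order }q\}$. *)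

theory Defs
  imports "HOL-Analysis.Analysis"
begin

text \<open>Points of R^d are modelled as functions nat => real whose coordinates
  i >= d vanish; multi-indices as functions nat => nat supported in {0..<d}.\<close>

definition in_Rd :: "nat \<Rightarrow> (nat \<Rightarrow> real) \<Rightarrow> bool" where
  "in_Rd d x \<longleftrightarrow> (\<forall>i\<ge>d. x i = 0)"

definition multi_indices :: "nat \<Rightarrow> (nat \<Rightarrow> nat) set" where
  "multi_indices d = {\<alpha>. \<forall>i\<ge>d. \<alpha> i = 0}"

definition mabs :: "nat \<Rightarrow> (nat \<Rightarrow> nat) \<Rightarrow> nat" where
  "mabs d \<alpha> = (\<Sum>i<d. \<alpha> i)"

definition monomial :: "nat \<Rightarrow> (nat \<Rightarrow> nat) \<Rightarrow> (nat \<Rightarrow> real) \<Rightarrow> real" where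
  "monomial d \<alpha> x = (\<Prod>i<d. x i ^ \<alpha> i)"

definition Poly_space :: "nat \<Rightarrow> nat \<Rightarrow> ((nat \<Rightarrow> real) \<Rightarrow> real) set" where
  "Poly_space d q = {p. \<exists>a. p = (\<lambda>x. \<Sum>\<alpha>\<in>{\<alpha>\<in>multi_indices d. mabs d \<alpha> < q}. a \<alpha> * monomial d \<alpha> x)}"

definition partial :: "nat \<Rightarrow> ((nat \<Rightarrow> real) \<Rightarrow> real) \<Rightarrow> (nat \<Rightarrow> real) \<Rightarrow> real" where
  "partial i f = (\<lambda>x. deriv (\<lambda>t. f (x(i := x i + t))) 0)"

definition partial_multi :: "nat \<Rightarrow> (nat \<Rightarrow> nat) \<Rightarrow> ((nat \<Rightarrow> real) \<Rightarrow> real) \<Rightarrow> (nat \<Rightarrow> real) \<Rightarrow> real" where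
  "partial_multi d \<alpha> f = foldr (\<lambda>i g. (partial i ^^ \<alpha> i) g) [0..<d] f"

definition Dop :: "nat \<Rightarrow> ((nat \<Rightarrow> nat) \<Rightarrow> (nat \<Rightarrow> real) \<Rightarrow> real) \<Rightarrow> ((nat \<Rightarrow> real) \<Rightarrow> real) \<Rightarrow> (nat \<Rightarrow> real) \<Rightarrow> real" where
  "Dop d c f z = (\<Sum>\<alpha>\<in>{\<alpha>\<in>multi_indices d. mabs d \<alpha> \<le> 2}. c \<alpha> z * partial_multi d \<alpha> f z)"

definition elliptic_at :: "nat \<Rightarrow> ((nat \<Rightarrow> nat) \<Rightarrow> (nat \<Rightarrow> real) \<Rightarrow> real) \<Rightarrow> (nat \<Rightarrow> real) \<Rightarrow> bool" where
  "elliptic_at d c z \<longleftrightarrow>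
     (\<forall>\<xi>. in_Rd d \<xi> \<and> (\<exists>i<d. \<xi> i \<noteq> 0) \<longrightarrow>
        (\<Sum>\<alpha>\<in>{\<alpha>\<in>multi_indices d. mabs d \<alpha> = 2}. c \<alpha> z * monomial d \<alpha> \<xi>) > 0)"

text \<open>Formula Df(z) ~ sum_j w_j f(xs!j), j < length xs (0-based, xs!0 = z).\<close>
definition exact_formula :: "nat \<Rightarrow> ((nat \<Rightarrow> nat) \<Rightarrow> (nat \<Rightarrow> real) \<Rightarrow> real) \<Rightarrow> (nat \<Rightarrow> real)
     \<Rightarrow> (nat \<Rightarrow> real) list \<Rightarrow> nat \<Rightarrow> (nat \<Rightarrow> real) \<Rightarrow> bool" where
  "exact_formula d c z xs q w \<longleftrightarrow>
     (\<forall>p\<in>Poly_space d q. Dop d c p z = (\<Sum>j<length xs. w j * p (xs ! j)))"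

definition positive_formula :: "(nat \<Rightarrow> real) list \<Rightarrow> (nat \<Rightarrow> real) \<Rightarrow> bool" where
  "positive_formula xs w \<longleftrightarrow> w 0 < 0 \<and> (\<forall>j. 1 \<le> j \<and> j < length xs \<longrightarrow> w j > 0)"

definition sqdist :: "nat \<Rightarrow> (nat \<Rightarrow> real) \<Rightarrow> (nat \<Rightarrow> real) \<Rightarrow> real" where
  "sqdist d x z = (\<Sum>i<d. (x i - z i)^2)"

definition rho12 :: "nat \<Rightarrow> nat \<Rightarrow> ((nat \<Rightarrow> nat) \<Rightarrow> (nat \<Rightarrow> real) \<Rightarrow> real) \<Rightarrow> (nat \<Rightarrow> real)
     \<Rightarrow> (nat \<Rightarrow> real) list \<Rightarrow> real" where
  "rho12 d q c z xs = Inf {(\<Sum>j<length xs. \<bar>w j\<bar> * sqdist d (xs ! j) z) | w. exact_formula d c z xs q w}"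

definition tauD :: "nat \<Rightarrow> ((nat \<Rightarrow> nat) \<Rightarrow> (nat \<Rightarrow> real) \<Rightarrow> real) \<Rightarrow> (nat \<Rightarrow> real) \<Rightarrow> real" where
  "tauD d c z = 2 * (\<Sum>i<d. c (\<lambda>k. if k = i then 2 else 0) z)"

end

theory Submission
  imports Defs
begin

text \<open>For q \<ge> 3 the squared distance x \<mapsto> ||x - z||^2 lies in Pi^d_q, and D applied to it at z
  only sees the pure second derivatives, each equal to 2; so D ||. - z||^2 (z) = tau_D(z).
  Hence every formula exact of order q satisfies sum_j w_j ||x_j - z||^2 = tau_D(z), which bounds
  sum_j |w_j| ||x_j - z||^2 from below, with equality for a positive formula because its only
  negative weight sits at x_1 = z.\<close>

lemma finite_multi_indices_bounded: "finite {\<alpha>\<in>multi_indices d. mabs d \<alpha> < q}"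
proof (rule finite_subset)
  show "{\<alpha>\<in>multi_indices d. mabs d \<alpha> < q} \<subseteq>
      {f. \<forall>i. (i \<in> {..<d} \<longrightarrow> f i \<in> {..<q}) \<and> (i \<notin> {..<d} \<longrightarrow> f i = 0)}"
  proof (clarsimp simp: multi_indices_def mabs_def)
    fix \<alpha> i assume "sum \<alpha> {..<d} < q" and "i < d"
    then show "\<alpha> i < q" using member_le_sum[of i "{..<d}" \<alpha>] by simp
  qed
qed (intro finite_set_of_finite_funs, auto)

lemma Poly_space_zero: "(\<lambda>x. 0) \<in> Poly_space d q"
  unfolding Poly_space_def by (intro CollectI exI[of _ "\<lambda>_. 0"]) simp

lemma Poly_space_add:
  assumes "f \<in> Poly_space d q" and "g \<in> Poly_space d q"
  shows "(\<lambda>x. f x + g x) \<in> Poly_space d q"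
proof -
  obtain a b where "f = (\<lambda>x. \<Sum>\<alpha>\<in>{\<alpha>\<in>multi_indices d. mabs d \<alpha> < q}. a \<alpha> * monomial d \<alpha> x)"
    and "g = (\<lambda>x. \<Sum>\<alpha>\<in>{\<alpha>\<in>multi_indices d. mabs d \<alpha> < q}. b \<alpha> * monomial d \<alpha> x)"
    using assms unfolding Poly_space_def by blast
  then show ?thesis unfolding Poly_space_def
    by (intro CollectI exI[of _ "\<lambda>\<alpha>. a \<alpha> + b \<alpha>"]) (simp add: distrib_right sum.distrib)
qed

lemma Poly_space_scale:
  assumes "f \<in> Poly_space d q"
  shows "(\<lambda>x. r * f x) \<in> Poly_space d q"
proof -
  obtain a where "f = (\<lambda>x. \<Sum>\<alpha>\<in>{\<alpha>\<in>multi_indices d. mabs d \<alpha> < q}. a \<alpha> * monomial d \<alpha> x)"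
    using assms unfolding Poly_space_def by blast
  then show ?thesis unfolding Poly_space_def
    by (intro CollectI exI[of _ "\<lambda>\<alpha>. r * a \<alpha>"]) (simp add: sum_distrib_left mult.assoc)
qed

lemma Poly_space_sum:
  "finite K \<Longrightarrow> (\<And>k. k \<in> K \<Longrightarrow> f k \<in> Poly_space d q) \<Longrightarrow> (\<lambda>x. \<Sum>k\<in>K. f k x) \<in> Poly_space d q"
  by (induction K rule: finite_induct) (simp_all add: Poly_space_zero Poly_space_add)

lemma monomial_in_Poly_space:
  assumes "\<beta> \<in> multi_indices d" and "mabs d \<beta> < q"
  shows "monomial d \<beta> \<in> Poly_space d q"
proof -
  have "monomial d \<beta> x =
      (\<Sum>\<alpha>\<in>{\<alpha>\<in>multi_indices d. mabs d \<alpha> < q}. (if \<alpha> = \<beta> then 1 else 0) * monomial d \<alpha> x)" for x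
  proof -
    have "(\<Sum>\<alpha>\<in>{\<alpha>\<in>multi_indices d. mabs d \<alpha> < q}. (if \<alpha> = \<beta> then 1 else 0) * monomial d \<alpha> x)
        = (\<Sum>\<alpha>\<in>{\<alpha>\<in>multi_indices d. mabs d \<alpha> < q}. if \<alpha> = \<beta> then monomial d \<alpha> x else 0)"
      by (rule sum.cong) auto
    then show ?thesis using assms finite_multi_indices_bounded[of d q] by simp
  qed
  then show ?thesis unfolding Poly_space_def
    by (intro CollectI exI[of _ "\<lambda>\<alpha>. if \<alpha> = \<beta> then 1 else 0"]) (simp add: fun_eq_iff)
qed

definition axis_index :: "nat \<Rightarrow> nat \<Rightarrow> nat \<Rightarrow> nat" where
  "axis_index i n = (\<lambda>k. if k = i then n else 0)"

lemma axis_index_in_multi_indices: "i < d \<Longrightarrow> axis_index i n \<in> multi_indices d"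
  by (auto simp: axis_index_def multi_indices_def)

lemma mabs_axis_index: "i < d \<Longrightarrow> mabs d (axis_index i n) = n"
  by (simp add: axis_index_def mabs_def)

lemma monomial_axis_index: "i < d \<Longrightarrow> monomial d (axis_index i n) x = x i ^ n"
  by (simp add: monomial_def axis_index_def if_distrib prod.delta cong: if_cong)

lemma sqdist_in_Poly_space:
  assumes "3 \<le> q"
  shows "(\<lambda>x. sqdist d x z) \<in> Poly_space d q"
  unfolding sqdist_def
proof (rule Poly_space_sum)
  fix k assume "k \<in> {..<d}"
  then have k: "k < d" by simp
  have axis: "monomial d (axis_index k n) \<in> Poly_space d q" if "n < 3" for n
    using monomial_in_Poly_space axis_index_in_multi_indices[OF k] mabs_axis_index[OF k] that assms
    by simp
  have "(\<lambda>x. (x k - z k)^2) = (\<lambda>x. monomial d (axis_index k 2) x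
      + ((-2 * z k) * monomial d (axis_index k 1) x + z k ^ 2 * monomial d (axis_index k 0) x))"
    using k by (simp add: monomial_axis_index power2_eq_square algebra_simps)
  then show "(\<lambda>x. (x k - z k)^2) \<in> Poly_space d q"
    by (simp only:) (intro Poly_space_add Poly_space_scale axis; simp)
qed simp

text \<open>Separable quadratics centred at z are closed under partial derivatives, which gives every
  derivative of the squared distance in closed form.\<close>

type_synonym quad_coeffs = "(nat \<Rightarrow> real) \<times> (nat \<Rightarrow> real) \<times> real"

definition sep_quadratic :: "nat \<Rightarrow> (nat \<Rightarrow> real) \<Rightarrow> quad_coeffs \<Rightarrow> (nat \<Rightarrow> real) \<Rightarrow> real" where
  "sep_quadratic d z = (\<lambda>(a, b, e) x. (\<Sum>k<d. a k * (x k - z k)^2 + b k * (x k - z k)) + e)"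

definition partial_coeffs :: "nat \<Rightarrow> quad_coeffs \<Rightarrow> quad_coeffs" where
  "partial_coeffs i = (\<lambda>(a, b, e). (\<lambda>_. 0, \<lambda>k. if k = i then 2 * a i else 0, b i))"

lemma sep_quadratic_update:
  assumes "i < d"
  obtains C where "\<And>t. sep_quadratic d z (a, b, e) (x(i := x i + t))
      = C + a i * (x i + t - z i)^2 + b i * (x i + t - z i) + e"
proof
  fix t
  let ?term = "\<lambda>y k. a k * (y k - z k)^2 + b k * (y k - z k)"
  have "(\<Sum>k<d. ?term (x(i := x i + t)) k) = ?term (x(i := x i + t)) i
      + (\<Sum>k\<in>{..<d}-{i}. ?term (x(i := x i + t)) k)"
    using assms by (simp add: sum.remove)
  also have "(\<Sum>k\<in>{..<d}-{i}. ?term (x(i := x i + t)) k) = (\<Sum>k\<in>{..<d}-{i}. ?term x k)"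
    by (rule sum.cong) auto
  finally show "sep_quadratic d z (a, b, e) (x(i := x i + t))
      = (\<Sum>k\<in>{..<d}-{i}. ?term x k) + a i * (x i + t - z i)^2 + b i * (x i + t - z i) + e"
    by (simp add: sep_quadratic_def)
qed

lemma partial_sep_quadratic:
  assumes "i < d"
  shows "partial i (sep_quadratic d z s) = sep_quadratic d z (partial_coeffs i s)"
proof
  fix x
  obtain a b e where s: "s = (a, b, e)" by (cases s)
  obtain C where C: "\<And>t. sep_quadratic d z s (x(i := x i + t))
      = C + a i * (x i + t - z i)^2 + b i * (x i + t - z i) + e"
    using sep_quadratic_update[OF assms] unfolding s by blast
  have "((\<lambda>t. C + a i * (x i + t - z i)^2 + b i * (x i + t - z i) + e) has_real_derivative
      a i * (2 * (x i + 0 - z i)) + b i) (at 0)"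
    by (auto intro!: derivative_eq_intros)
  then have "partial i (sep_quadratic d z s) x = 2 * a i * (x i - z i) + b i"
    unfolding partial_def C by (subst DERIV_imp_deriv) (auto simp: algebra_simps)
  also have "\<dots> = sep_quadratic d z (partial_coeffs i s) x"
    using assms by (simp add: s sep_quadratic_def partial_coeffs_def if_distrib if_distribR cong: if_cong)
  finally show "partial i (sep_quadratic d z s) x = sep_quadratic d z (partial_coeffs i s) x" .
qed

lemma partial_multi_sep_quadratic:
  "partial_multi d \<alpha> (sep_quadratic d z s)
    = sep_quadratic d z (foldr (\<lambda>i. partial_coeffs i ^^ \<alpha> i) [0..<d] s)"
proof -
  have "foldr (\<lambda>i. partial i ^^ \<alpha> i) L (sep_quadratic d z s)
      = sep_quadratic d z (foldr (\<lambda>i. partial_coeffs i ^^ \<alpha> i) L s)" if "\<forall>i\<in>set L. i < d" for L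
  proof -
    have pow: "(partial i ^^ n) (sep_quadratic d z t) = sep_quadratic d z ((partial_coeffs i ^^ n) t)"
      if "i < d" for i n t
      using that by (induction n) (simp_all add: partial_sep_quadratic)
    show ?thesis using that by (induction L) (simp_all add: pow)
  qed
  then show ?thesis unfolding partial_multi_def by simp
qed

lemma partial_coeffs_pow_vanish:
  assumes "3 \<le> n"
  shows "(partial_coeffs i ^^ n) s = (\<lambda>_. 0, \<lambda>_. 0, 0)"
proof -
  have zero: "(partial_coeffs i ^^ m) (\<lambda>_. 0, \<lambda>_. 0, 0) = (\<lambda>_. 0, \<lambda>_. 0, 0)" for m
    by (induction m) (simp_all add: partial_coeffs_def fun_eq_iff)
  have "(partial_coeffs i ^^ 3) s = (\<lambda>_. 0, \<lambda>_. 0, 0)"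
    by (simp add: partial_coeffs_def numeral_3_eq_3 fun_eq_iff split: prod.split)
  then show ?thesis
    using zero[of "n - 3"] funpow_add[of "n - 3" 3 "partial_coeffs i"] assms by simp
qed

definition sqdist_derivative_coeffs :: "(nat \<Rightarrow> nat) \<Rightarrow> nat list \<Rightarrow> quad_coeffs" where
  "sqdist_derivative_coeffs \<alpha> L = (let m = sum_list (map \<alpha> L) in
     (\<lambda>_. if m = 0 then 1 else 0,
      \<lambda>k. if m = 1 \<and> k \<in> set L then 2 * real (\<alpha> k) else 0,
      if m = 2 then (\<Sum>k\<in>set L. real (\<alpha> k * (\<alpha> k - 1))) else 0))"

lemma member_le_sum_list_map: "k \<in> set L \<Longrightarrow> (\<alpha> :: nat \<Rightarrow> nat) k \<le> sum_list (map \<alpha> L)"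
  by (induction L) auto

lemma foldr_partial_coeffs_sqdist:
  "distinct L \<Longrightarrow> foldr (\<lambda>i. partial_coeffs i ^^ \<alpha> i) L (\<lambda>_. 1, \<lambda>_. 0, 0) = sqdist_derivative_coeffs \<alpha> L"
proof (induction L)
  case Nil
  then show ?case by (simp add: sqdist_derivative_coeffs_def)
next
  case (Cons x L)
  define m where "m = sum_list (map \<alpha> L)"
  have small: "k \<in> set L \<Longrightarrow> \<alpha> k \<le> m" for k
    unfolding m_def by (rule member_le_sum_list_map)
  have "x \<notin> set L" using Cons.prems by simp
  consider "\<alpha> x = 0" | "\<alpha> x = 1" | "\<alpha> x = 2" | "\<alpha> x \<ge> 3" by linarith
  then show ?case
  proof cases
    case 1
    then show ?thesis using Cons \<open>x \<notin> set L\<close> by (auto simp: sqdist_derivative_coeffs_def Let_def fun_eq_iff)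
  next
    case 2
    then show ?thesis using Cons \<open>x \<notin> set L\<close> small
      by (auto simp: sqdist_derivative_coeffs_def Let_def fun_eq_iff partial_coeffs_def m_def[symmetric])
  next
    case 3
    then show ?thesis using Cons \<open>x \<notin> set L\<close> small
      by (auto simp: sqdist_derivative_coeffs_def Let_def fun_eq_iff partial_coeffs_def
          numeral_2_eq_2 m_def[symmetric])
  next
    case 4
    then show ?thesis using Cons
      by (simp add: sqdist_derivative_coeffs_def Let_def partial_coeffs_pow_vanish)
  qed
qed

lemma sep_quadratic_at_centre: "sep_quadratic d z s z = snd (snd s)"
  by (simp add: sep_quadratic_def split: prod.split)

lemma sqdist_eq_sep_quadratic: "(\<lambda>x. sqdist d x z) = sep_quadratic d z (\<lambda>_. 1, \<lambda>_. 0, 0)"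
  by (simp add: sqdist_def sep_quadratic_def fun_eq_iff)

lemma sum_descending_products_mabs_2:
  assumes "\<alpha> \<in> multi_indices d" and "mabs d \<alpha> = 2"
  shows "(\<Sum>k<d. real (\<alpha> k * (\<alpha> k - 1))) = (if \<alpha> \<in> (\<lambda>i. axis_index i 2) ` {..<d} then 2 else 0)"
proof (cases "\<exists>i<d. 2 \<le> \<alpha> i")
  case True
  then obtain i where i: "i < d" "2 \<le> \<alpha> i" by blast
  have "\<alpha> i + (\<Sum>k\<in>{..<d}-{i}. \<alpha> k) = 2"
    using assms(2) i by (simp add: mabs_def sum.remove)
  then have "\<alpha> i = 2" and "(\<Sum>k\<in>{..<d}-{i}. \<alpha> k) = 0"
    using i by linarith+
  then have "\<alpha> k = 0" if "k \<noteq> i" for k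
    using that assms(1) by (cases "k < d") (auto simp: multi_indices_def)
  then have "\<alpha> = axis_index i 2"
    using \<open>\<alpha> i = 2\<close> by (auto simp: fun_eq_iff axis_index_def)
  moreover have "(\<Sum>k<d. real (axis_index i 2 k * (axis_index i 2 k - 1))) = 2"
    using i by (simp add: axis_index_def if_distrib if_distribR cong: if_cong)
  ultimately show ?thesis using i by auto
next
  case False
  then have "(\<Sum>k<d. real (\<alpha> k * (\<alpha> k - 1))) = 0"
    by (intro sum.neutral ballI) (auto simp: less_2_cases_iff not_le)
  moreover have "\<alpha> \<noteq> axis_index i 2" if "i < d" for i
  proof
    assume "\<alpha> = axis_index i 2"
    then have "\<alpha> i = 2" by (simp add: axis_index_def)
    with False that show False by auto
  qed
  ultimately show ?thesis by auto
qed

lemma partial_multi_sqdist_at_centre: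
  assumes "\<alpha> \<in> multi_indices d"
  shows "partial_multi d \<alpha> (\<lambda>x. sqdist d x z) z
    = (if \<alpha> \<in> (\<lambda>i. axis_index i 2) ` {..<d} then 2 else 0)"
proof -
  have "sum_list (map \<alpha> [0..<d]) = mabs d \<alpha>"
    by (simp add: mabs_def sum_list_sum_nth atLeast0LessThan)
  then have "partial_multi d \<alpha> (\<lambda>x. sqdist d x z) z
      = (if mabs d \<alpha> = 2 then (\<Sum>k<d. real (\<alpha> k * (\<alpha> k - 1))) else 0)"
    by (simp add: sqdist_eq_sep_quadratic partial_multi_sep_quadratic sep_quadratic_at_centre
        foldr_partial_coeffs_sqdist sqdist_derivative_coeffs_def Let_def atLeast0LessThan)
  then show ?thesis
    using sum_descending_products_mabs_2[OF assms] by (auto simp: mabs_axis_index)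
qed

lemma Dop_sqdist: "Dop d c (\<lambda>x. sqdist d x z) z = tauD d c z"
proof -
  let ?S = "{\<alpha>\<in>multi_indices d. mabs d \<alpha> \<le> 2}"
  let ?A = "(\<lambda>i. axis_index i 2) ` {..<d}"
  have "finite ?S"
    using finite_multi_indices_bounded[of d 3] by (simp add: less_Suc_eq_le eval_nat_numeral)
  moreover have "?A \<subseteq> ?S"
    by (auto simp: axis_index_in_multi_indices mabs_axis_index)
  ultimately have "Dop d c (\<lambda>x. sqdist d x z) z
      = (\<Sum>\<alpha>\<in>?A. c \<alpha> z * partial_multi d \<alpha> (\<lambda>x. sqdist d x z) z)"
    unfolding Dop_def
    by (intro sum.mono_neutral_right) (auto simp: partial_multi_sqdist_at_centre)
  also have "\<dots> = (\<Sum>\<alpha>\<in>?A. c \<alpha> z * 2)"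
    by (rule sum.cong) (auto simp: partial_multi_sqdist_at_centre axis_index_in_multi_indices)
  also have "\<dots> = (\<Sum>i<d. c (axis_index i 2) z * 2)"
  proof (rule sum.reindex_cong)
    show "inj_on (\<lambda>i. axis_index i 2) {..<d}"
    proof (rule inj_onI)
      fix i j assume "axis_index i (2::nat) = axis_index j 2"
      then have "axis_index i (2::nat) i = axis_index j 2 i" by simp
      then show "i = j" by (simp add: axis_index_def split: if_splits)
    qed
  qed simp_all
  finally show ?thesis by (simp add: tauD_def axis_index_def sum_distrib_left mult.commute)
qed

lemma exact_formula_sqdist:
  assumes "exact_formula d c z xs q w" and "3 \<le> q"
  shows "(\<Sum>j<length xs. w j * sqdist d (xs ! j) z) = tauD d c z"
  using assms Dop_sqdist[of d c z] sqdist_in_Poly_space[of q d z]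
  unfolding exact_formula_def by auto

lemma sqdist_nonneg: "0 \<le> sqdist d x z"
  unfolding sqdist_def by (intro sum_nonneg) simp

lemma tauD_le_weighted_sqdist:
  assumes "exact_formula d c z xs q w" and "3 \<le> q"
  shows "tauD d c z \<le> (\<Sum>j<length xs. \<bar>w j\<bar> * sqdist d (xs ! j) z)"
proof -
  have "(\<Sum>j<length xs. w j * sqdist d (xs ! j) z) \<le> (\<Sum>j<length xs. \<bar>w j\<bar> * sqdist d (xs ! j) z)"
    by (intro sum_mono mult_right_mono) (simp_all add: sqdist_nonneg)
  then show ?thesis using exact_formula_sqdist[OF assms] by simp
qed

lemma positive_formula_weighted_sqdist:
  assumes "positive_formula xs w" and "xs ! 0 = z"
  shows "(\<Sum>j<length xs. \<bar>w j\<bar> * sqdist d (xs ! j) z) = (\<Sum>j<length xs. w j * sqdist d (xs ! j) z)"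
proof (rule sum.cong)
  fix j assume "j \<in> {..<length xs}"
  then show "\<bar>w j\<bar> * sqdist d (xs ! j) z = w j * sqdist d (xs ! j) z"
  proof (cases "j = 0")
    case False
    then have "0 < w j" using assms(1) \<open>j \<in> {..<length xs}\<close> by (simp add: positive_formula_def)
    then show ?thesis by simp
  qed (simp add: assms(2) sqdist_def)
qed simp

theorem mainTheorem15:
  fixes d q :: nat and c :: "(nat \<Rightarrow> nat) \<Rightarrow> (nat \<Rightarrow> real) \<Rightarrow> real"
    and z :: "nat \<Rightarrow> real" and xs :: "(nat \<Rightarrow> real) list"
  assumes "in_Rd d z" and "\<forall>x\<in>set xs. in_Rd d x"
    and "distinct xs" and "xs \<noteq> []" and "xs ! 0 = z"
    and "elliptic_at d c z"
    and "q \<in> {3, 4}"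
    and "\<exists>w. positive_formula xs w \<and> exact_formula d c z xs q w"
  shows "rho12 d q c z xs = tauD d c z"
proof -
  have q: "3 \<le> q" using assms(7) by auto
  obtain w where pos: "positive_formula xs w" and exact: "exact_formula d c z xs q w"
    using assms(8) by blast
  let ?cost = "\<lambda>w. \<Sum>j<length xs. \<bar>w j\<bar> * sqdist d (xs ! j) z"
  have "tauD d c z = ?cost w"
    using positive_formula_weighted_sqdist[OF pos assms(5)] exact_formula_sqdist[OF exact q] by simp
  then have "tauD d c z \<in> {?cost w | w. exact_formula d c z xs q w}"
    using exact by blast
  moreover have "tauD d c z \<le> y" if "y \<in> {?cost w | w. exact_formula d c z xs q w}" for y
    using that tauD_le_weighted_sqdist[OF _ q] by blast
  ultimately show ?thesis
    unfolding rho12_def by (rule cInf_eq_minimum)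
qed

end
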